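(* $z_2(5,3)\ge 9$.
   Context: Double Zarankiewicz number: consider configurations $G=([m],[n],E_1\cup E_2)$ where $[m]=\{1,\dots,m\}$, $E_1\subseteq[m]\times[n]$ is a set of 1-edges (cells) and $E_2$ is a set of 2-edges $(i,j;k,l)$ with $i,k\in[m]$, $j,l\in[n]$, $i\ne k$, $j\ne l$; the cells $(i,j)$ and $(k,l)$ are the two halves of this 2-edge. Simplicity condition: the halves of all 2-edges are pairwise distinct cells and none of them belongs to $E_1$. A cell is occupied if it lies in $E_1$ or is a half of some 2-edge. $G$ contains a generalized $C_4$-cycle if (1) there are four 1-edges $(i,j),(i,l),(k,j),(k,l)\in E_1$ with $i\ne k$, $j\ne l$; or (2) there is a 2-edge $(i,j;k,l)\in E_2$ whose two opposite cells $(i,l)$ and $(k,j)$ are both occupied; or (3) there are a 2-edge $(i,j;p,q)\in E_2$ and a cell $(k,l)$ such that the five cells $(k,l),(k,j),(k,q),(i,l),(p,l)$ are pairwise distinct and all occupied. $z_2(m,n)$ is the maximum of $|E_1|+|E_2|$ over all such $G$ satisfying the simplicity condition and containing no generalized $C_4$-cycle. *)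

theory Defs
  imports Main
begin

type_synonym cell = "nat \<times> nat"
type_synonym edge2 = "cell \<times> cell"

text \<open>A 2-edge (i,j;k,l) is represented as the pair ((i,j),(k,l)); its halves are the two cells.\<close>
definition halves :: "edge2 \<Rightarrow> cell set" where
  "halves e = {fst e, snd e}"

definition occupied :: "cell set \<Rightarrow> edge2 set \<Rightarrow> cell \<Rightarrow> bool" where
  "occupied E1 E2 c \<longleftrightarrow> c \<in> E1 \<or> (\<exists>e\<in>E2. c \<in> halves e)"

definition is_config :: "nat \<Rightarrow> nat \<Rightarrow> cell set \<Rightarrow> edge2 set \<Rightarrow> bool" where
  "is_config m n E1 E2 \<longleftrightarrow>
     E1 \<subseteq> {1..m} \<times> {1..n} \<and>
     (\<forall>((i,j),(k,l))\<in>E2. i \<in> {1..m} \<and> k \<in> {1..m} \<and> j \<in> {1..n} \<and> l \<in> {1..n}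
                          \<and> i \<noteq> k \<and> j \<noteq> l)"

definition simple_config :: "cell set \<Rightarrow> edge2 set \<Rightarrow> bool" where
  "simple_config E1 E2 \<longleftrightarrow>
     (\<forall>e\<in>E2. \<forall>e'\<in>E2. e \<noteq> e' \<longrightarrow> halves e \<inter> halves e' = {}) \<and>
     (\<forall>e\<in>E2. halves e \<inter> E1 = {})"

definition has_gen_C4 :: "cell set \<Rightarrow> edge2 set \<Rightarrow> bool" where
  "has_gen_C4 E1 E2 \<longleftrightarrow>
     (\<exists>i j k l. i \<noteq> k \<and> j \<noteq> l \<and> (i,j) \<in> E1 \<and> (i,l) \<in> E1 \<and> (k,j) \<in> E1 \<and> (k,l) \<in> E1) \<or>
     (\<exists>((i,j),(k,l))\<in>E2. occupied E1 E2 (i,l) \<and> occupied E1 E2 (k,j)) \<or>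
     (\<exists>((i,j),(p,q))\<in>E2. \<exists>k l.
        distinct [(k,l),(k,j),(k,q),(i,l),(p,l)] \<and>
        (\<forall>c\<in>{(k,l),(k,j),(k,q),(i,l),(p,l)}. occupied E1 E2 c))"

definition z2 :: "nat \<Rightarrow> nat \<Rightarrow> nat" where
  "z2 m n = Max {card E1 + card E2 | E1 E2.
                  is_config m n E1 E2 \<and> simple_config E1 E2 \<and> \<not> has_gen_C4 E1 E2}"

end

theory Submission
  imports Defs
begin

lemma finite_z2_candidates:
  "finite {card E1 + card E2 | E1 E2.
             is_config m n E1 E2 \<and> simple_config E1 E2 \<and> \<not> has_gen_C4 E1 E2}"
proof -
  let ?C = "{1..m} \<times> {1..n}"
  have "{card E1 + card E2 | E1 E2.
           is_config m n E1 E2 \<and> simple_config E1 E2 \<and> \<not> has_gen_C4 E1 E2}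
        \<subseteq> (\<lambda>(E1, E2). card E1 + card E2) ` (Pow ?C \<times> Pow (?C \<times> ?C))"
    unfolding is_config_def by fastforce
  then show ?thesis
    by (rule finite_subset) simp
qed

lemma z2_ge_card:
  assumes "is_config m n E1 E2" and "simple_config E1 E2" and "\<not> has_gen_C4 E1 E2"
  shows "card E1 + card E2 \<le> z2 m n"
  unfolding z2_def using assms by (intro Max_ge[OF finite_z2_candidates]) blast

text \<open>
  The witness, drawn with cell (i,j) in row i and column j: seven 1-edges (marked 1)
  and the two 2-edges a = (1,3;4,2) and b = (3,1;5,2); cells marked . are unoccupied.
  \<^verbatim>\<open>
      1 . a
      1 1 .
      b 1 1
      . a 1
      . b 1
  \<close>
\<close>
definition cells_5_3 :: "cell set" where
  "cells_5_3 = {(1,1), (2,1), (2,2), (3,2), (3,3), (4,3), (5,3)}"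

definition edges_5_3 :: "edge2 set" where
  "edges_5_3 = {((1,3),(4,2)), ((3,1),(5,2))}"

lemma card_witness_5_3: "card cells_5_3 + card edges_5_3 = 9"
  unfolding cells_5_3_def edges_5_3_def by simp

lemma is_config_witness_5_3: "is_config 5 3 cells_5_3 edges_5_3"
  unfolding is_config_def cells_5_3_def edges_5_3_def by auto

lemma simple_config_witness_5_3: "simple_config cells_5_3 edges_5_3"
  unfolding simple_config_def halves_def cells_5_3_def edges_5_3_def by auto

lemma occupied_witness_5_3_iff:
  "occupied cells_5_3 edges_5_3 c \<longleftrightarrow>
     c \<in> {(1,1), (2,1), (2,2), (3,2), (3,3), (4,3), (5,3), (1,3), (4,2), (3,1), (5,2)}"
  unfolding occupied_def halves_def cells_5_3_def edges_5_3_def by auto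

lemma witness_5_3_row_pairs:
  assumes "(i,j) \<in> cells_5_3" and "(i,l) \<in> cells_5_3" and "j < l"
  shows "(i,j,l) = (2,1,2) \<or> (i,j,l) = (3,2,3)"
  using assms unfolding cells_5_3_def
  by (simp only: insert_iff empty_iff prod.inject) (elim disjE; simp)

lemma witness_5_3_no_rectangle:
  "\<not> (\<exists>i j k l. i \<noteq> k \<and> j \<noteq> l \<and> (i,j) \<in> cells_5_3 \<and> (i,l) \<in> cells_5_3
                 \<and> (k,j) \<in> cells_5_3 \<and> (k,l) \<in> cells_5_3)"
proof (intro notI, elim exE conjE)
  fix i j k l
  assume "i \<noteq> k" "j \<noteq> l" and ij: "(i,j) \<in> cells_5_3" and il: "(i,l) \<in> cells_5_3"
    and kj: "(k,j) \<in> cells_5_3" and kl: "(k,l) \<in> cells_5_3"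
  then consider "j < l" | "l < j" by linarith
  then show False
  proof cases
    case 1
    with \<open>i \<noteq> k\<close> show False
      using witness_5_3_row_pairs[OF ij il] witness_5_3_row_pairs[OF kj kl] by auto
  next
    case 2
    with \<open>i \<noteq> k\<close> show False
      using witness_5_3_row_pairs[OF il ij] witness_5_3_row_pairs[OF kl kj] by auto
  qed
qed

lemma witness_5_3_no_occupied_opposite:
  "\<not> (\<exists>((i,j),(k,l))\<in>edges_5_3.
          occupied cells_5_3 edges_5_3 (i,l) \<and> occupied cells_5_3 edges_5_3 (k,j))"
  unfolding occupied_witness_5_3_iff by (simp add: cells_5_3_def edges_5_3_def)

text \<open>
  Only the 2-edge and the cell (k,l) are split into cases (2 * 11 of them); putting the
  other four cells into the hypotheses as well would multiply this by 11^4.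
\<close>
lemma witness_5_3_cross_unoccupied:
  assumes "((i,j),(p,q)) \<in> edges_5_3" and "occupied cells_5_3 edges_5_3 (k,l)"
  shows "\<not> (distinct [(k,l),(k,j),(k,q),(i,l),(p,l)] \<and>
            occupied cells_5_3 edges_5_3 (k,j) \<and> occupied cells_5_3 edges_5_3 (k,q) \<and>
            occupied cells_5_3 edges_5_3 (i,l) \<and> occupied cells_5_3 edges_5_3 (p,l))"
  using assms unfolding occupied_witness_5_3_iff unfolding edges_5_3_def
  by (simp only: insert_iff empty_iff prod.inject) (elim disjE conjE; simp)

lemma witness_5_3_no_occupied_cross:
  "\<not> (\<exists>((i,j),(p,q))\<in>edges_5_3. \<exists>k l.
          distinct [(k,l),(k,j),(k,q),(i,l),(p,l)] \<and>
          (\<forall>c\<in>{(k,l),(k,j),(k,q),(i,l),(p,l)}. occupied cells_5_3 edges_5_3 c))"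
proof
  assume "\<exists>((i,j),(p,q))\<in>edges_5_3. \<exists>k l.
          distinct [(k,l),(k,j),(k,q),(i,l),(p,l)] \<and>
          (\<forall>c\<in>{(k,l),(k,j),(k,q),(i,l),(p,l)}. occupied cells_5_3 edges_5_3 c)"
  then obtain i j p q k l where "((i,j),(p,q)) \<in> edges_5_3"
    and "distinct [(k,l),(k,j),(k,q),(i,l),(p,l)]"
    and "\<forall>c\<in>{(k,l),(k,j),(k,q),(i,l),(p,l)}. occupied cells_5_3 edges_5_3 c"
    by blast
  then show False
    using witness_5_3_cross_unoccupied by blast
qed

lemma witness_5_3_no_gen_C4: "\<not> has_gen_C4 cells_5_3 edges_5_3"
  unfolding has_gen_C4_def de_Morgan_disj
  by (intro conjI witness_5_3_no_rectangle witness_5_3_no_occupied_opposite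
      witness_5_3_no_occupied_cross)

theorem theorem4p1:
  shows "z2 5 3 \<ge> 9"
  using z2_ge_card[OF is_config_witness_5_3 simple_config_witness_5_3 witness_5_3_no_gen_C4]
  by (simp add: card_witness_5_3)

end
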